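(* Let $p_n$ be the number of trees $t\in\mathcal{T}_n$ with $\gamma(t)\le 2$ (equivalently, trees having no subtree that is a caterpillar with 3 leaves, a "pitchfork"); $p_n$ is the coefficient of $x^n$ in $\frac{1-\sqrt{1-4x+8x^3}}{2}$. Then, with $R=\frac14(\sqrt5-1)$, $$\lim_{n\to\infty}\frac{\frac14\sqrt{\frac{4R-24R^3}{\pi n^3}}\left(\frac1R\right)^n}{p_n}=1.$$
   Context: $\mathcal{T}_n$ is the set of ordered rooted binary trees (every internal node has exactly two ordered children) with $n$ leaves. A tree is a caterpillar if every node is either a leaf or has at least one leaf among its direct children. The subtree of $t$ at a node $v$ consists of $v$ and all its descendants, and $\gamma(t)$ is the largest number of leaves of a caterpillar occurring as the subtree of $t$ at some node. *)

theory Defs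
  imports Complex_Main
begin

datatype btree = Leaf | Node btree btree

fun leaves :: "btree \<Rightarrow> nat" where
  "leaves Leaf = 1"
| "leaves (Node l r) = leaves l + leaves r"

fun subtrees :: "btree \<Rightarrow> btree set" where
  "subtrees Leaf = {Leaf}"
| "subtrees (Node l r) = insert (Node l r) (subtrees l \<union> subtrees r)"

fun is_leaf :: "btree \<Rightarrow> bool" where
  "is_leaf Leaf = True"
| "is_leaf (Node _ _) = False"

definition caterpillar :: "btree \<Rightarrow> bool" where
  "caterpillar t \<longleftrightarrow> (\<forall>s \<in> subtrees t. case s of Leaf \<Rightarrow> True
                                   | Node l r \<Rightarrow> is_leaf l \<or> is_leaf r)"

definition gamma :: "btree \<Rightarrow> nat" where
  "gamma t = Max {leaves s | s. s \<in> subtrees t \<and> caterpillar s}"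

definition p :: "nat \<Rightarrow> nat" where
  "p n = card {t. leaves t = n \<and> gamma t \<le> 2}"

end

theory Submission
  imports Defs "HOL-Computational_Algebra.Formal_Power_Series" "HOL-Analysis.Analysis"
    "HOL-Real_Asymp.Real_Asymp"
begin

(* A caterpillar with at least three leaves always contains a pitchfork
   (a caterpillar with exactly three leaves), so gamma t \<le> 2 iff t has no pitchfork subtree.
   Splitting at the root gives a convolution recurrence for p, i.e. the functional equation
   P^2 = P - x + 2x^3 for the generating function P.

   Solving the quadratic with formal power series gives
   1 - 2P = sqrt (1 - (1 + sqrt 5) x) * sqrt (1 - (1 - sqrt 5) x) * sqrt (1 - 2x),
   each factor being a binomial series of exponent 1/2.

   A general transfer lemma (sqrt_singularity_transfer) computes the
   coefficient asymptotics of sqrt (1 - x/rho) * h(x) when h is analytic a bit beyond rho,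
   using the Gamma-function asymptotics of binomial coefficients and Tannery's theorem.
   Applied with rho = (sqrt 5 - 1)/4 and h the remaining two factors, it yields
   n^(3/2) rho^n p n \<longrightarrow> sqrt (4 rho - 24 rho^3) / (4 sqrt pi), which is the main theorem. *)

(* A pitchfork is a caterpillar with three leaves; there are exactly two of them. *)
definition pitchfork :: "btree \<Rightarrow> bool" where
  "pitchfork t \<longleftrightarrow> t = Node Leaf (Node Leaf Leaf) \<or> t = Node (Node Leaf Leaf) Leaf"

fun pitchfork_free :: "btree \<Rightarrow> bool" where
  "pitchfork_free Leaf = True"
| "pitchfork_free (Node l r) \<longleftrightarrow>
     pitchfork_free l \<and> pitchfork_free r \<and> \<not> pitchfork (Node l r)"

lemma pitchfork_free_iff: "pitchfork_free t \<longleftrightarrow> (\<forall>s\<in>subtrees t. \<not> pitchfork s)"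
  by (induction t) (auto simp: pitchfork_def)

lemma finite_subtrees: "finite (subtrees t)"
  by (induction t) auto

lemma Leaf_in_subtrees: "Leaf \<in> subtrees t"
  by (induction t) auto

lemma subtrees_trans: "s \<in> subtrees t \<Longrightarrow> subtrees s \<subseteq> subtrees t"
  by (induction t) auto

lemma leaves_pos: "0 < leaves t"
  by (induction t) auto

lemma leaves_eq_1_iff [simp]: "leaves t = Suc 0 \<longleftrightarrow> t = Leaf"
proof (cases t)
  case (Node l r)
  then show ?thesis using leaves_pos[of l] leaves_pos[of r] by auto
qed simp

lemma leaves_eq_2: "leaves t = 2 \<Longrightarrow> t = Node Leaf Leaf"
proof (cases t)
  case (Node l r)
  assume "leaves t = 2"
  with Node have "leaves l + leaves r = 2" by simp
  then have "leaves l = Suc 0" "leaves r = Suc 0"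
    using leaves_pos[of l] leaves_pos[of r] by linarith+
  with Node show ?thesis by simp
qed simp

lemma caterpillar_Leaf [simp]: "caterpillar Leaf"
  by (simp add: caterpillar_def)

lemma caterpillar_Node:
  "caterpillar (Node l r) \<longleftrightarrow> (l = Leaf \<or> r = Leaf) \<and> caterpillar l \<and> caterpillar r"
proof -
  have "is_leaf t \<longleftrightarrow> t = Leaf" for t by (cases t) auto
  then show ?thesis by (auto simp: caterpillar_def)
qed

(* Every caterpillar with at least three leaves has a pitchfork at its bottom:
   descend along the non-leaf children until only three leaves remain. *)
lemma caterpillar_contains_pitchfork:
  "caterpillar s \<Longrightarrow> leaves s \<ge> 3 \<Longrightarrow> \<exists>u\<in>subtrees s. pitchfork u"
proof (induction s)
  case (Node l r)
  define u where "u = (if l = Leaf then r else l)"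
  have u: "u \<in> {l, r}" "caterpillar u" "leaves u + 1 = leaves (Node l r)"
    and shape: "Node l r = Node Leaf u \<or> Node l r = Node u Leaf"
    using Node.prems(1) by (auto simp: u_def caterpillar_Node)
  show ?case
  proof (cases "leaves u = 2")
    case True
    then have "pitchfork (Node l r)" using shape leaves_eq_2 by (auto simp: pitchfork_def)
    then show ?thesis by auto
  next
    case False
    then have "\<exists>v\<in>subtrees u. pitchfork v" using Node u by auto
    with u show ?thesis by auto
  qed
qed simp

lemma gamma_le_2_iff: "gamma t \<le> 2 \<longleftrightarrow> pitchfork_free t"
proof -
  let ?C = "{leaves s | s. s \<in> subtrees t \<and> caterpillar s}"
  have "?C = leaves ` {s \<in> subtrees t. caterpillar s}" by auto
  then have "finite ?C" using finite_subtrees by simp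
  moreover have "?C \<noteq> {}"
    using Leaf_in_subtrees[of t] by (auto simp: caterpillar_def)
  ultimately have "gamma t \<le> 2 \<longleftrightarrow> (\<forall>s\<in>subtrees t. caterpillar s \<longrightarrow> leaves s \<le> 2)"
    unfolding gamma_def by (subst Max_le_iff) blast+
  also have "\<dots> \<longleftrightarrow> (\<forall>s\<in>subtrees t. \<not> pitchfork s)"
  proof
    assume "\<forall>s\<in>subtrees t. caterpillar s \<longrightarrow> leaves s \<le> 2"
    moreover have "pitchfork s \<Longrightarrow> caterpillar s \<and> leaves s = 3" for s
      by (auto simp: pitchfork_def caterpillar_Node)
    ultimately show "\<forall>s\<in>subtrees t. \<not> pitchfork s"
      by fastforce
  next
    assume no_pitchfork: "\<forall>s\<in>subtrees t. \<not> pitchfork s"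
    show "\<forall>s\<in>subtrees t. caterpillar s \<longrightarrow> leaves s \<le> 2"
    proof (intro ballI impI)
      fix s assume s: "s \<in> subtrees t" "caterpillar s"
      show "leaves s \<le> 2"
      proof (rule ccontr)
        assume "\<not> leaves s \<le> 2"
        then obtain u where "u \<in> subtrees s" "pitchfork u"
          using caterpillar_contains_pitchfork s(2) by fastforce
        with subtrees_trans[OF s(1)] no_pitchfork show False by blast
      qed
    qed
  qed
  finally show ?thesis by (simp add: pitchfork_free_iff)
qed

definition pf_trees :: "nat \<Rightarrow> btree set" where
  "pf_trees n = {t. leaves t = n \<and> pitchfork_free t}"

lemma p_eq_card: "p n = card (pf_trees n)"
  unfolding p_def pf_trees_def by (simp add: gamma_le_2_iff)

lemma finite_leaves_le: "finite {t. leaves t \<le> n}"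
proof (induction n)
  case 0
  have "{t. leaves t \<le> 0} = {}" using leaves_pos not_le by blast
  then show ?case by (simp only: finite.emptyI)
next
  case (Suc n)
  have "{t. leaves t \<le> Suc n} \<subseteq>
          insert Leaf (case_prod Node ` ({t. leaves t \<le> n} \<times> {t. leaves t \<le> n}))"
  proof
    fix t assume "t \<in> {t. leaves t \<le> Suc n}"
    then show "t \<in> insert Leaf (case_prod Node ` ({t. leaves t \<le> n} \<times> {t. leaves t \<le> n}))"
    proof (cases t)
      case (Node l r)
      with \<open>t \<in> {t. leaves t \<le> Suc n}\<close> leaves_pos[of l] leaves_pos[of r]
      have "leaves l \<le> n" "leaves r \<le> n" by auto
      with Node show ?thesis by auto
    qed simp
  qed
  then show ?case by (rule finite_subset) (use Suc in auto)
qed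

lemma finite_pf_trees: "finite (pf_trees n)"
  by (rule finite_subset[OF _ finite_leaves_le[of n]]) (auto simp: pf_trees_def)

lemma p_0: "p 0 = 0" and p_1: "p 1 = 1"
proof -
  have "pf_trees 0 = {}" "pf_trees 1 = {Leaf}"
    using leaves_pos by (auto simp: pf_trees_def)
  then show "p 0 = 0" "p 1 = 1" by (simp_all add: p_eq_card)
qed

(* Splitting at the root: a tree with n \<ge> 2 leaves is pitchfork-free iff both children are
   and the tree itself is not one of the two pitchforks, which occur only for n = 3.
   Hence p satisfies a quadratic convolution recurrence with a correction at n = 3. *)
lemma p_convolution:
  assumes "n \<ge> 2"
  shows "p n + (if n = 3 then 2 else 0) = (\<Sum>k\<le>n. p k * p (n - k))"
proof -
  define D where "D = (\<Union>k\<in>{..n}. pf_trees k \<times> pf_trees (n - k))"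
  define P3 where "P3 = {(Leaf, Node Leaf Leaf), (Node Leaf Leaf, Leaf)}"
  have card_D: "card D = (\<Sum>k\<le>n. p k * p (n - k))"
    unfolding D_def p_eq_card
    by (subst card_UN_disjoint)
       (simp_all add: finite_pf_trees card_cartesian_product, auto simp: pf_trees_def)
  have fin_D: "finite D" unfolding D_def by (auto simp: finite_pf_trees)
  have "pf_trees n = case_prod Node ` (D - P3)"
  proof
    show "pf_trees n \<subseteq> case_prod Node ` (D - P3)"
    proof
      fix t assume t: "t \<in> pf_trees n"
      then obtain l r where lr: "t = Node l r" using assms by (cases t) (auto simp: pf_trees_def)
      with t have "(l, r) \<in> D - P3" unfolding D_def P3_def pf_trees_def
        by (auto simp: pitchfork_def)
      with lr show "t \<in> case_prod Node ` (D - P3)" by force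
    qed
    show "case_prod Node ` (D - P3) \<subseteq> pf_trees n"
      unfolding D_def P3_def pf_trees_def by (auto simp: pitchfork_def)
  qed
  moreover have "inj_on (case_prod Node) (D - P3)" by (auto simp: inj_on_def)
  ultimately have "p n = card D - card (D \<inter> P3)"
    by (simp add: p_eq_card card_image card_Diff_subset_Int fin_D Diff_Int2)
  moreover have "D \<inter> P3 = (if n = 3 then P3 else {})"
    unfolding D_def P3_def pf_trees_def by (auto simp: pitchfork_def)
  moreover have "card (D \<inter> P3) \<le> card D" by (simp add: card_mono fin_D)
  ultimately show ?thesis using card_D by (auto simp: P3_def)
qed

(* sqrt_fps c is the binomial series of sqrt (1 - c x). *)
definition sqrt_fps :: "real \<Rightarrow> real fps" where
  "sqrt_fps c = Abs_fps (\<lambda>k. ((1/2) gchoose k) * (-c) ^ k)"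

lemma sqrt_fps_nth: "fps_nth (sqrt_fps c) k = ((1/2) gchoose k) * (-c) ^ k"
  by (simp add: sqrt_fps_def)

(* It is a square root of 1 - c x, by the Vandermonde identity for binomial coefficients. *)
lemma sqrt_fps_square: "sqrt_fps c * sqrt_fps c = 1 - fps_const c * fps_X"
proof (rule fps_ext)
  fix n
  have "fps_nth (sqrt_fps c * sqrt_fps c) n
          = (\<Sum>i=0..n. ((1/2) gchoose i) * ((1/2) gchoose (n - i)) * (-c) ^ n)"
    unfolding fps_mult_nth sqrt_fps_nth
    by (rule sum.cong) (auto simp: mult_ac simp flip: power_add)
  also have "\<dots> = (\<Sum>i=0..n. ((1/2) gchoose i) * ((1/2) gchoose (n - i))) * (-c) ^ n"
    by (simp add: sum_distrib_right)
  also have "(\<Sum>i=0..n. ((1/2) gchoose i) * ((1/2) gchoose (n - i))) = (1 :: real) gchoose n"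
    using gbinomial_Vandermonde[of "1/2 :: real" "1/2" n] by simp
  also have "((1 :: real) gchoose n) = of_nat (1 choose n)"
    using binomial_gbinomial[where 'a = real, of 1 n] by simp
  finally show "fps_nth (sqrt_fps c * sqrt_fps c) n = fps_nth (1 - fps_const c * fps_X) n"
    by (cases n) (auto simp: binomial_eq_0)
qed

lemma fps_square_root_unique:
  fixes Q S :: "'a :: {idom, ring_char_0} fps"
  assumes "Q * Q = S * S" "fps_nth Q 0 = fps_nth S 0" "fps_nth S 0 \<noteq> 0"
  shows "Q = S"
proof -
  have "(Q - S) * (Q + S) = 0" using assms(1) by (simp add: algebra_simps)
  moreover have "Q + S \<noteq> 0"
  proof
    assume "Q + S = 0"
    then have "fps_nth (Q + S) 0 = 0" by simp
    with assms(2,3) show False by simp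
  qed
  ultimately show ?thesis by simp
qed

definition pf_gf :: "real fps" where
  "pf_gf = Abs_fps (\<lambda>n. real (p n))"

lemma pf_gf_square: "pf_gf * pf_gf = pf_gf - fps_X + 2 * fps_X ^ 3"
proof (rule fps_ext)
  fix n
  have "fps_nth (pf_gf * pf_gf) n = real (\<Sum>k\<le>n. p k * p (n - k))"
    by (simp add: fps_mult_nth pf_gf_def atLeast0AtMost)
  also have "\<dots> = real (p n) - (if n = 1 then 1 else 0) + (if n = 3 then 2 else 0)"
  proof (cases "n \<ge> 2")
    case True
    have "real (p n + (if n = 3 then 2 else 0)) = real (\<Sum>k\<le>n. p k * p (n - k))"
      using p_convolution[OF True] by (simp only:)
    with True show ?thesis by (auto split: if_splits)
  next
    case False
    then consider "n = 0" | "n = 1" by linarith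
    then show ?thesis using p_1 by cases (simp_all add: p_0)
  qed
  finally show "fps_nth (pf_gf * pf_gf) n = fps_nth (pf_gf - fps_X + 2 * fps_X ^ 3) n"
    by (simp add: pf_gf_def numeral_fps_const)
qed

lemma cubic_factorization:
  "(1 - 4 * fps_X + 8 * fps_X ^ 3 :: real fps)
     = (1 - fps_const (1 + sqrt 5) * fps_X) * (1 - fps_const (1 - sqrt 5) * fps_X)
         * (1 - fps_const 2 * fps_X)"
proof -
  have "(1 - fps_const (1 + sqrt 5) * fps_X) * (1 - fps_const (1 - sqrt 5) * fps_X)
      = 1 - fps_const ((1 + sqrt 5) + (1 - sqrt 5)) * fps_X
          + fps_const ((1 + sqrt 5) * (1 - sqrt 5)) * (fps_X ^ 2 :: real fps)"
    by (simp add: algebra_simps power2_eq_square flip: fps_const_add fps_const_mult)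
  also have "\<dots> = 1 - 2 * fps_X - 4 * fps_X ^ 2"
    by (simp add: algebra_simps numeral_fps_const)
  finally show ?thesis
    by (simp add: numeral_fps_const algebra_simps power2_eq_square power3_eq_cube)
qed

(* Solving the quadratic: 1 - 2P = sqrt (1 - 4x + 8x^3), written as a product of three
   binomial series. *)
lemma pf_gf_closed_form:
  "1 - 2 * pf_gf = sqrt_fps (1 + sqrt 5) * (sqrt_fps (1 - sqrt 5) * sqrt_fps 2)"
    (is "_ = ?S")
proof (rule fps_square_root_unique)
  have "?S * ?S = (sqrt_fps (1 + sqrt 5) * sqrt_fps (1 + sqrt 5))
                  * (sqrt_fps (1 - sqrt 5) * sqrt_fps (1 - sqrt 5)) * (sqrt_fps 2 * sqrt_fps 2)"
    by (simp add: ac_simps)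
  also have "\<dots> = 1 - 4 * fps_X + 8 * fps_X ^ 3"
    by (simp only: sqrt_fps_square cubic_factorization)
  also have "\<dots> = 1 - 4 * pf_gf + 4 * (pf_gf * pf_gf)"
    unfolding pf_gf_square by (simp add: algebra_simps)
  also have "\<dots> = (1 - 2 * pf_gf) * (1 - 2 * pf_gf)"
    by (simp add: algebra_simps)
  finally show "(1 - 2 * pf_gf) * (1 - 2 * pf_gf) = ?S * ?S" ..
  show "fps_nth (1 - 2 * pf_gf) 0 = fps_nth ?S 0" "fps_nth ?S 0 \<noteq> 0"
    by (simp_all add: pf_gf_def sqrt_fps_nth p_0 numeral_fps_const)
qed

lemma p_coeff:
  "n \<ge> 1 \<Longrightarrow>
     real (p n) = - fps_nth (sqrt_fps (1 + sqrt 5) * (sqrt_fps (1 - sqrt 5) * sqrt_fps 2)) n / 2"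
  by (simp flip: pf_gf_closed_form add: pf_gf_def numeral_fps_const)

(* Gamma (-1/2) = -2 sqrt pi, from the functional equation and Gamma (1/2) = sqrt pi. *)
lemma Gamma_minus_half: "Gamma (- (1/2) :: real) = - 2 * sqrt pi"
proof -
  have "(- (1/2) :: real) \<notin> \<int>\<^sub>\<le>\<^sub>0"
  proof
    assume "(- (1/2) :: real) \<in> \<int>\<^sub>\<le>\<^sub>0"
    then obtain k :: nat where "(- (1/2) :: real) = - of_nat k" by (auto elim!: nonpos_Ints_cases')
    then have "real k * 2 = 1" by simp
    then have "k * 2 = 1" by linarith
    then show False by simp
  qed
  then have "Gamma (- (1/2) + 1 :: real) = - (1/2) * Gamma (- (1/2))" by (rule Gamma_plus1)
  then show ?thesis using Gamma_one_half_real by simp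
qed

definition sqrt_coeff_scaled :: "nat \<Rightarrow> real" where
  "sqrt_coeff_scaled k = ((1/2) gchoose k) * (-1) ^ k * (real k * sqrt (real k))"

lemma sqrt_coeff_scaled_limit: "sqrt_coeff_scaled \<longlonglongrightarrow> - 1 / (2 * sqrt pi)"
proof -
  have "(\<lambda>k. ((1/2 :: real) gchoose k) / ((-1) ^ k / exp ((1/2 + 1) * ln (real k))))
          \<longlonglongrightarrow> inverse (Gamma (- (1/2)))"
    using gbinomial_asymptotic[of "1/2 :: real"] by simp
  also have "inverse (Gamma (- (1/2) :: real)) = - 1 / (2 * sqrt pi)"
    by (simp add: Gamma_minus_half inverse_eq_divide)
  finally have lim: "(\<lambda>k. ((1/2 :: real) gchoose k) / ((-1) ^ k / exp ((1/2 + 1) * ln (real k))))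
                       \<longlonglongrightarrow> - 1 / (2 * sqrt pi)" .
  have "eventually (\<lambda>k. ((1/2 :: real) gchoose k) / ((-1) ^ k / exp ((1/2 + 1) * ln (real k)))
                          = sqrt_coeff_scaled k) sequentially"
    using eventually_gt_at_top[of 0]
  proof eventually_elim
    case (elim k)
    have "exp ((1/2 + 1) * ln (real k)) = real k powr (1/2 + 1)"
      using elim by (simp add: powr_def)
    also have "\<dots> = real k powr (1/2) * real k powr 1" by (rule powr_add)
    also have "\<dots> = real k * sqrt (real k)" by (simp add: powr_half_sqrt)
    finally show ?case
      by (simp add: sqrt_coeff_scaled_def field_simps flip: power_mult_distrib)
  qed
  with lim show ?thesis by (rule Lim_transform_eventually)
qed

lemma half_binomial_abs_le_1: "\<bar>(1/2 :: real) gchoose k\<bar> \<le> 1"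
proof (induction k)
  case (Suc k)
  have "(1/2 :: real) * ((1/2) gchoose k)
          = real k * ((1/2) gchoose k) + real (Suc k) * ((1/2) gchoose (Suc k))"
    by (rule gbinomial_mult_1)
  then have "(1/2 :: real) gchoose (Suc k) = ((1/2) gchoose k) * ((1/2 - real k) / real (Suc k))"
    by (simp add: field_simps del: of_nat_Suc)
  moreover have factor: "\<bar>(1/2 - real k) / real (Suc k)\<bar> \<le> 1"
    by (simp add: abs_divide del: of_nat_Suc)
  ultimately show ?case
    using mult_mono[OF Suc.IH factor] by (simp add: abs_mult del: of_nat_Suc)
qed simp

lemma summable_poly_times_geometric:
  fixes r :: real
  assumes r: "0 \<le> r" "r < 1"
  shows "summable (\<lambda>j. (real j + 1) ^ k * r ^ j)"
proof -
  define q where "q = (1 + r) / 2"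
  have q: "r < q" "q < 1" using r by (simp_all add: q_def)
  have "(\<lambda>n. (real n + 2) / (real n + 1)) \<longlonglongrightarrow> 1" by real_asymp
  then have "(\<lambda>n. ((real n + 2) / (real n + 1)) ^ k * r) \<longlonglongrightarrow> 1 ^ k * r"
    by (intro tendsto_intros)
  then have "eventually (\<lambda>n. ((real n + 2) / (real n + 1)) ^ k * r < q) sequentially"
    using q by (intro order_tendstoD(2)) simp_all
  then obtain N where N: "\<And>n. n \<ge> N \<Longrightarrow> ((real n + 2) / (real n + 1)) ^ k * r < q"
    by (auto simp: eventually_sequentially)
  show ?thesis
  proof (rule summable_ratio_test[OF q(2)])
    fix n assume "n \<ge> N"
    have "norm ((real (Suc n) + 1) ^ k * r ^ Suc n)
            = (((real n + 2) / (real n + 1)) ^ k * r) * ((real n + 1) ^ k * r ^ n)"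
      using r by (simp add: field_simps)
    also have "\<dots> \<le> q * norm ((real n + 1) ^ k * r ^ n)"
      using N[OF \<open>n \<ge> N\<close>] r by (simp add: mult_right_mono)
    finally show "norm ((real (Suc n) + 1) ^ k * r ^ Suc n) \<le> q * norm ((real n + 1) ^ k * r ^ n)" .
  qed
qed

lemma sqrt_series:
  fixes z :: real
  assumes "\<bar>z\<bar> < 1"
  shows "(\<lambda>i. ((1/2) gchoose i) * z ^ i) sums sqrt (1 + z)"
    and "summable (\<lambda>i. norm (((1/2) gchoose i) * z ^ i))"
proof -
  have "(1 + z) powr (1/2) = sqrt (1 + z)" using assms by (intro powr_half_sqrt) simp
  then show "(\<lambda>i. ((1/2) gchoose i) * z ^ i) sums sqrt (1 + z)"
    using gen_binomial_real[OF assms, of "1/2"] by simp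
  have "norm (((1/2) gchoose i) * z ^ i) \<le> \<bar>z\<bar> ^ i" for i
    using mult_right_mono[OF half_binomial_abs_le_1, of "\<bar>z\<bar> ^ i" i]
    by (simp add: abs_mult power_abs)
  then show "summable (\<lambda>i. norm (((1/2) gchoose i) * z ^ i))"
    using assms by (intro summable_comparison_test[OF _ summable_geometric[of "\<bar>z\<bar>"]]) auto
qed

lemma sqrt_fps_product_sum:
  assumes "\<bar>a * x\<bar> < 1" "\<bar>b * x\<bar> < 1"
  shows "(\<Sum>j. fps_nth (sqrt_fps a * sqrt_fps b) j * x ^ j) = sqrt (1 - a * x) * sqrt (1 - b * x)"
proof -
  define u where "u i = ((1/2) gchoose i) * (- (a * x)) ^ i" for i
  define v where "v i = ((1/2) gchoose i) * (- (b * x)) ^ i" for i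
  have su: "u sums sqrt (1 - a * x)" "summable (\<lambda>i. norm (u i))"
    unfolding u_def using sqrt_series[of "- (a * x)"] assms(1) by simp_all
  have sv: "v sums sqrt (1 - b * x)" "summable (\<lambda>i. norm (v i))"
    unfolding v_def using sqrt_series[of "- (b * x)"] assms(2) by simp_all
  have "fps_nth (sqrt_fps a * sqrt_fps b) k * x ^ k = (\<Sum>i\<le>k. u i * v (k - i))" for k
  proof -
    have "fps_nth (sqrt_fps a * sqrt_fps b) k * x ^ k
            = (\<Sum>i\<le>k. fps_nth (sqrt_fps a) i * fps_nth (sqrt_fps b) (k - i) * (x ^ i * x ^ (k - i)))"
      by (simp add: fps_mult_nth atLeast0AtMost sum_distrib_right flip: power_add)
    also have "\<dots> = (\<Sum>i\<le>k. u i * v (k - i))"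
      unfolding sqrt_fps_nth u_def v_def minus_mult_left power_mult_distrib
      by (simp only: mult_ac)
    finally show ?thesis .
  qed
  then have "(\<Sum>j. fps_nth (sqrt_fps a * sqrt_fps b) j * x ^ j) = suminf u * suminf v"
    using Cauchy_product[OF su(2) sv(2)] by simp
  then show ?thesis using su(1) sv(1) by (simp add: sums_iff)
qed

lemma sqrt_fps_product_coeff_bound:
  assumes "\<bar>a\<bar> \<le> r" "\<bar>b\<bar> \<le> r"
  shows "\<bar>fps_nth (sqrt_fps a * sqrt_fps b) j\<bar> \<le> (real j + 1) * r ^ j"
proof -
  have coeff: "\<bar>fps_nth (sqrt_fps c) k\<bar> \<le> r ^ k" if "\<bar>c\<bar> \<le> r" for c k
    using mult_mono[OF half_binomial_abs_le_1 power_mono[OF that abs_ge_zero]]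
    by (simp add: sqrt_fps_nth abs_mult power_abs)
  have "\<bar>fps_nth (sqrt_fps a * sqrt_fps b) j\<bar>
          \<le> (\<Sum>i=0..j. \<bar>fps_nth (sqrt_fps a) i\<bar> * \<bar>fps_nth (sqrt_fps b) (j - i)\<bar>)"
    unfolding fps_mult_nth abs_mult[symmetric] by (rule sum_abs)
  also have "\<dots> \<le> (\<Sum>i=0..j. r ^ i * r ^ (j - i))"
    using coeff assms by (intro sum_mono mult_mono) auto
  also have "\<dots> = (real j + 1) * r ^ j"
    by (simp flip: power_add)
  finally show ?thesis .
qed

(* The correction factor (n / (n - j))^(3/2) relating k^(3/2) to n^(3/2) for k = n - j. *)
definition shift_weight :: "nat \<Rightarrow> nat \<Rightarrow> real" where
  "shift_weight n j = (real n / real (n - j)) * sqrt (real n / real (n - j))"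

lemma shift_weight_bounds:
  assumes "j < n"
  shows "0 \<le> shift_weight n j" "shift_weight n j \<le> (real j + 1) ^ 2"
proof -
  define q where "q = real n / real (n - j)"
  obtain k where k: "n = j + Suc k" using less_imp_Suc_add[OF assms] by auto
  have "real n \<le> (real j + 1) * real (n - j)"
    using k mult_nonneg_nonneg[of "real j" "real k"] by (simp add: algebra_simps)
  then have q_le: "q \<le> real j + 1" using assms by (simp add: q_def divide_le_eq mult.commute)
  have q_ge: "1 \<le> q" using assms by (simp add: q_def)
  have "sqrt q \<le> q" using q_ge by (intro real_le_lsqrt) (simp_all add: power2_eq_square)
  then have "q * sqrt q \<le> q * q" using q_ge by (simp add: mult_left_mono)
  also have "\<dots> \<le> (real j + 1) * (real j + 1)" using q_le q_ge by (intro mult_mono) simp_all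
  finally show "shift_weight n j \<le> (real j + 1) ^ 2"
    by (simp add: shift_weight_def q_def power2_eq_square)
  show "0 \<le> shift_weight n j" by (simp add: shift_weight_def)
qed

lemma shift_weight_limit: "(\<lambda>n. shift_weight n j) \<longlonglongrightarrow> 1"
proof (rule LIMSEQ_offset[where k = "Suc j"])
  have "(\<lambda>n. (real n + (real j + 1)) / (real n + 1)) \<longlonglongrightarrow> 1" by real_asymp
  then have "(\<lambda>n. (real n + (real j + 1)) / (real n + 1) * sqrt ((real n + (real j + 1)) / (real n + 1)))
               \<longlonglongrightarrow> 1 * sqrt 1"
    by (intro tendsto_intros)
  moreover have "shift_weight (n + Suc j) j
      = (real n + (real j + 1)) / (real n + 1) * sqrt ((real n + (real j + 1)) / (real n + 1))" for n
    by (simp add: shift_weight_def Suc_diff_le algebra_simps)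
  ultimately show "(\<lambda>n. shift_weight (n + Suc j) j) \<longlonglongrightarrow> 1" by simp
qed

lemma convolution_limit:
  fixes e c :: "nat \<Rightarrow> real"
  assumes e: "e \<longlonglongrightarrow> L" and c: "summable (\<lambda>j. (real j + 1) ^ 2 * \<bar>c j\<bar>)"
  shows "(\<lambda>n. \<Sum>j<n. e (n - j) * shift_weight n j * c j) \<longlonglongrightarrow> L * suminf c"
proof -
  obtain B where B: "\<And>n. \<bar>e n\<bar> \<le> B"
    using convergent_imp_Bseq[OF convergentI[OF e]] by (metis BseqE real_norm_def)
  have B_nonneg: "0 \<le> B" using abs_ge_zero[of "e 0"] B[of 0] by linarith
  define f where "f j n = (if j < n then e (n - j) * shift_weight n j * c j else 0)" for j n
  have f_limit: "(\<lambda>n. f j n) \<longlonglongrightarrow> L * 1 * c j" for j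
  proof -
    have "(\<lambda>n. e (n - j) * shift_weight n j * c j) \<longlonglongrightarrow> L * 1 * c j"
      by (intro tendsto_intros shift_weight_limit
            filterlim_compose[OF e filterlim_minus_const_nat_at_top])
    moreover have "eventually (\<lambda>n. e (n - j) * shift_weight n j * c j = f j n) sequentially"
      using eventually_gt_at_top[of j] by eventually_elim (simp add: f_def)
    ultimately show ?thesis by (rule Lim_transform_eventually)
  qed
  have f_bound: "norm (f j n) \<le> B * ((real j + 1) ^ 2 * \<bar>c j\<bar>)" for j n
  proof (cases "j < n")
    case True
    have "norm (f j n) = \<bar>e (n - j)\<bar> * (shift_weight n j * \<bar>c j\<bar>)"
      using True shift_weight_bounds(1)[OF True] by (simp add: f_def abs_mult)
    also have "\<dots> \<le> B * ((real j + 1) ^ 2 * \<bar>c j\<bar>)"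
      using shift_weight_bounds[OF True] B_nonneg
      by (intro mult_mono[OF B] mult_right_mono) simp_all
    finally show ?thesis .
  qed (use B_nonneg in \<open>simp add: f_def\<close>)
  have "eventually (\<lambda>(j, n). norm (f j n) \<le> B * ((real j + 1) ^ 2 * \<bar>c j\<bar>))
          (at_top \<times>\<^sub>F sequentially)"
    using f_bound by (intro always_eventually) auto
  from tannerys_theorem[OF f_limit this summable_mult[OF c] sequentially_bot]
  have "(\<lambda>n. \<Sum>k. f k n) \<longlonglongrightarrow> (\<Sum>j. L * 1 * c j)" by blast
  moreover have "(\<Sum>k. f k n) = (\<Sum>j<n. e (n - j) * shift_weight n j * c j)" for n
    by (subst suminf_finite[of "{..<n}"]) (auto simp: f_def)
  moreover have "norm (c j) \<le> (real j + 1) ^ 2 * \<bar>c j\<bar>" for j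
    using mult_right_mono[of 1 "(real j + 1) ^ 2" "\<bar>c j\<bar>"] by simp
  then have "summable c"
    by (intro summable_comparison_test[OF _ c]) auto
  then have "(\<Sum>j. L * 1 * c j) = L * suminf c" by (simp add: suminf_mult)
  ultimately show ?thesis by simp
qed

lemma scaled_coeff_term:
  assumes pos: "\<rho> > 0" and "j < n"
  shows "real n * sqrt (real n) * \<rho> ^ n * (((1/2) gchoose (n - j)) * (- (1/\<rho>)) ^ (n - j) * h)
           = sqrt_coeff_scaled (n - j) * shift_weight n j * (h * \<rho> ^ j)"
proof -
  define k where "k = n - j"
  have n: "n = j + k" "0 < k" using assms(2) by (simp_all add: k_def)
  have inverse_powers: "\<rho> ^ k * (1/\<rho>) ^ k = 1"
    using pos by (simp flip: power_mult_distrib)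
  have powers: "\<rho> ^ n * (- (1/\<rho>)) ^ k = \<rho> ^ j * (-1) ^ k"
  proof -
    have "\<rho> ^ n * (- (1/\<rho>)) ^ k = \<rho> ^ j * (-1) ^ k * (\<rho> ^ k * (1/\<rho>) ^ k)"
      unfolding n(1) power_add power_minus[of "1/\<rho>"] by (simp only: mult_ac)
    then show ?thesis unfolding inverse_powers by simp
  qed
  have "sqrt (real k) > 0" using n(2) by simp
  then have weight: "real k * sqrt (real k) * shift_weight n j = real n * sqrt (real n)"
    unfolding shift_weight_def k_def[symmetric] real_sqrt_divide using n(2) by (simp add: field_simps)
  show ?thesis
    unfolding sqrt_coeff_scaled_def k_def[symmetric]
    by (simp add: weight[symmetric] powers[symmetric] mult_ac)
qed

(* The dominant contribution comes from the square-root factor; the terms with j near n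
   contribute o(n^(-3/2) \<rho>^(-n)) by summability. *)
lemma sqrt_singularity_transfer:
  fixes h :: "nat \<Rightarrow> real"
  assumes pos: "\<rho> > 0" and h: "summable (\<lambda>j. (real j + 1) ^ 2 * \<bar>h j * \<rho> ^ j\<bar>)"
  shows "(\<lambda>n. real n * sqrt (real n) * \<rho> ^ n * fps_nth (sqrt_fps (1/\<rho>) * Abs_fps h) n)
           \<longlonglongrightarrow> - (\<Sum>j. h j * \<rho> ^ j) / (2 * sqrt pi)"
proof -
  define c where "c j = h j * \<rho> ^ j" for j
  have split: "real n * sqrt (real n) * \<rho> ^ n * fps_nth (sqrt_fps (1/\<rho>) * Abs_fps h) n
      = (\<Sum>j<n. sqrt_coeff_scaled (n - j) * shift_weight n j * c j) + real n * sqrt (real n) * c n"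
    for n
  proof -
    let ?s = "real n * sqrt (real n) * \<rho> ^ n"
    have "fps_nth (sqrt_fps (1/\<rho>) * Abs_fps h) n
            = (\<Sum>j<n. ((1/2) gchoose (n - j)) * (- (1/\<rho>)) ^ (n - j) * h j) + h n"
      by (subst mult.commute) (simp add: fps_mult_nth atLeast0AtMost lessThan_Suc_atMost[symmetric]
                                         sqrt_fps_nth mult.commute)
    then have "?s * fps_nth (sqrt_fps (1/\<rho>) * Abs_fps h) n
            = (\<Sum>j<n. ?s * (((1/2) gchoose (n - j)) * (- (1/\<rho>)) ^ (n - j) * h j))
                + real n * sqrt (real n) * c n"
      by (simp add: c_def sum_distrib_left algebra_simps)
    also have "(\<Sum>j<n. ?s * (((1/2) gchoose (n - j)) * (- (1/\<rho>)) ^ (n - j) * h j))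
                 = (\<Sum>j<n. sqrt_coeff_scaled (n - j) * shift_weight n j * c j)"
      by (rule sum.cong) (simp_all add: scaled_coeff_term[OF pos] c_def)
    finally show ?thesis .
  qed
  have "(\<lambda>n. \<Sum>j<n. sqrt_coeff_scaled (n - j) * shift_weight n j * c j)
          \<longlonglongrightarrow> - 1 / (2 * sqrt pi) * suminf c"
    using h by (intro convolution_limit sqrt_coeff_scaled_limit) (simp add: c_def)
  moreover have "(\<lambda>n. real n * sqrt (real n) * c n) \<longlonglongrightarrow> 0"
  proof (rule Lim_null_comparison)
    show "(\<lambda>n. (real n + 1) ^ 2 * \<bar>c n\<bar>) \<longlonglongrightarrow> 0"
      using summable_LIMSEQ_zero[OF h] by (simp add: c_def)
    have "real n * sqrt (real n) \<le> (real n + 1) ^ 2" for n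
    proof -
      have "real n \<le> (real n + 1) ^ 2"
        using mult_nonneg_nonneg[of "real n" "real n"] by (simp add: power2_eq_square algebra_simps)
      then have "sqrt (real n) \<le> real n + 1" by (intro real_le_lsqrt) simp_all
      then show ?thesis
        using mult_mono[of "real n" "real n + 1" "sqrt (real n)" "real n + 1"]
        by (simp add: power2_eq_square)
    qed
    then show "eventually (\<lambda>n. norm (real n * sqrt (real n) * c n) \<le> (real n + 1) ^ 2 * \<bar>c n\<bar>)
                 sequentially"
      by (intro always_eventually allI) (simp add: abs_mult mult_right_mono)
  qed
  ultimately show ?thesis
    unfolding split c_def by (auto intro: tendsto_eq_intros)
qed

(* The dominant singularity of the generating function: the smallest root 1/(1 + sqrt 5)
   of 1 - 4x + 8x^3. *)
definition rho :: real where
  "rho = (sqrt 5 - 1) / 4"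

lemma sqrt_5_bounds: "2 < sqrt (5 :: real)" "sqrt (5 :: real) < 3"
  by (rule real_less_rsqrt, simp) (rule real_less_lsqrt, simp_all)

lemma rho_pos: "0 < rho"
  and two_rho_less_1: "2 * rho < 1"
  and inverse_rho: "1 / rho = 1 + sqrt 5"
  and conjugate_rho_less_1: "\<bar>(1 - sqrt 5) * rho\<bar> < 1"
  and rho_constant: "(1 - (1 - sqrt 5) * rho) * (1 - 2 * rho) = 4 * rho - 24 * rho ^ 3"
proof -
  note s2 = sqrt_5_bounds(1) and s3 = sqrt_5_bounds(2)
  have s5: "sqrt (5 :: real) * sqrt 5 = 5" by simp
  show "0 < rho" "2 * rho < 1" using s2 s3 by (simp_all add: rho_def)
  have "(1 + sqrt 5) * rho = 1" using s5 by (simp add: rho_def algebra_simps)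
  then show "1 / rho = 1 + sqrt 5" using s2 by (simp add: rho_def field_simps)
  have "(1 - sqrt 5) * rho = (2 * sqrt 5 - 1 - sqrt 5 * sqrt 5) / 4"
    by (simp add: rho_def algebra_simps)
  then have "(1 - sqrt 5) * rho = (sqrt 5 - 3) / 2" using s5 by simp
  then show "\<bar>(1 - sqrt 5) * rho\<bar> < 1" using s2 s3 by simp
  have "sqrt 5 ^ 3 = 5 * sqrt (5 :: real)" using s5 by (simp add: power3_eq_cube)
  then show "(1 - (1 - sqrt 5) * rho) * (1 - 2 * rho) = 4 * rho - 24 * rho ^ 3"
    using s5 by (simp add: rho_def field_simps power3_eq_cube)
qed

(* The factor of sqrt (1 - 4x + 8x^3) that is analytic beyond rho. *)
definition remainder_fps :: "real fps" where
  "remainder_fps = sqrt_fps (1 - sqrt 5) * sqrt_fps 2"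

(* Its coefficients are summable against (j + 1)^2 at rho, since 2 rho < 1 ... *)
lemma remainder_fps_summable:
  "summable (\<lambda>j. (real j + 1) ^ 2 * \<bar>fps_nth remainder_fps j * rho ^ j\<bar>)"
proof (rule summable_comparison_test)
  show "summable (\<lambda>j. (real j + 1) ^ 3 * (2 * rho) ^ j)"
    using rho_pos two_rho_less_1 by (intro summable_poly_times_geometric) simp_all
  have "\<bar>1 - sqrt (5 :: real)\<bar> \<le> 2" using sqrt_5_bounds by simp
  then have coeff: "\<bar>fps_nth remainder_fps j\<bar> \<le> (real j + 1) * 2 ^ j" for j
    unfolding remainder_fps_def by (rule sqrt_fps_product_coeff_bound) simp
  have "(real j + 1) ^ 2 * \<bar>fps_nth remainder_fps j * rho ^ j\<bar>
          = (real j + 1) ^ 2 * (\<bar>fps_nth remainder_fps j\<bar> * rho ^ j)" for j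
    using rho_pos by (simp add: abs_mult)
  also have "\<dots> j \<le> (real j + 1) ^ 2 * ((real j + 1) * 2 ^ j * rho ^ j)" for j
    using coeff[of j] rho_pos by (intro mult_left_mono mult_right_mono) simp_all
  also have "\<dots> j = (real j + 1) ^ 3 * (2 * rho) ^ j" for j
    by (simp add: power2_eq_square power3_eq_cube power_mult_distrib)
  finally show "\<exists>N. \<forall>j\<ge>N. norm ((real j + 1) ^ 2 * \<bar>fps_nth remainder_fps j * rho ^ j\<bar>)
                         \<le> (real j + 1) ^ 3 * (2 * rho) ^ j"
    by simp
qed

lemma remainder_fps_value:
  "(\<Sum>j. fps_nth remainder_fps j * rho ^ j) = sqrt (4 * rho - 24 * rho ^ 3)"
proof -
  have "(\<Sum>j. fps_nth remainder_fps j * rho ^ j) = sqrt (1 - (1 - sqrt 5) * rho) * sqrt (1 - 2 * rho)"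
    unfolding remainder_fps_def
    using conjugate_rho_less_1 two_rho_less_1 rho_pos by (intro sqrt_fps_product_sum) simp_all
  also have "\<dots> = sqrt (4 * rho - 24 * rho ^ 3)"
    by (simp only: real_sqrt_mult[symmetric] rho_constant)
  finally show ?thesis .
qed

lemma p_asymptotic:
  "(\<lambda>n. real n * sqrt (real n) * rho ^ n * real (p n))
     \<longlonglongrightarrow> sqrt (4 * rho - 24 * rho ^ 3) / (4 * sqrt pi)"
proof -
  let ?scaled = "\<lambda>n. real n * sqrt (real n) * rho ^ n * fps_nth (sqrt_fps (1/rho) * remainder_fps) n"
  have "?scaled \<longlonglongrightarrow> - sqrt (4 * rho - 24 * rho ^ 3) / (2 * sqrt pi)"
    using sqrt_singularity_transfer[OF rho_pos remainder_fps_summable]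
    unfolding fps_nth_inverse remainder_fps_value by simp
  from tendsto_divide[OF tendsto_minus[OF this] tendsto_const[of "2 :: real"]]
  have "(\<lambda>n. - ?scaled n / 2) \<longlonglongrightarrow> - (- sqrt (4 * rho - 24 * rho ^ 3) / (2 * sqrt pi)) / 2"
    by simp
  moreover have "eventually (\<lambda>n. - ?scaled n / 2 = real n * sqrt (real n) * rho ^ n * real (p n))
                   sequentially"
    using eventually_ge_at_top[of 1]
    by eventually_elim (simp add: p_coeff inverse_rho remainder_fps_def)
  ultimately show ?thesis by (simp add: Lim_transform_eventually)
qed

lemma ratio_limit_one:
  fixes x a b :: "nat \<Rightarrow> real"
  assumes "(\<lambda>n. x n * a n) \<longlonglongrightarrow> K" "K \<noteq> 0"
    and "eventually (\<lambda>n. x n * b n = K) sequentially"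
  shows "(\<lambda>n. b n / a n) \<longlonglongrightarrow> 1"
proof -
  have "eventually (\<lambda>n. K = x n * b n) sequentially"
    using assms(3) by (simp add: eq_commute)
  then have "(\<lambda>n. x n * b n) \<longlonglongrightarrow> K" by (rule Lim_transform_eventually[OF tendsto_const])
  then have "(\<lambda>n. (x n * b n) / (x n * a n)) \<longlonglongrightarrow> K / K"
    using assms(1,2) by (rule tendsto_divide)
  moreover have "eventually (\<lambda>n. (x n * b n) / (x n * a n) = b n / a n) sequentially"
    using assms(3) by eventually_elim (use assms(2) in auto)
  ultimately show ?thesis using assms(2) by (simp add: Lim_transform_eventually)
qed

lemma normalization_identity:
  fixes R C :: real
  assumes "R \<noteq> 0" "n \<ge> 1"
  shows "real n * sqrt (real n) * R ^ n * (1/4 * sqrt (C / (pi * real n ^ 3)) * (1/R) ^ n)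
           = sqrt C / (4 * sqrt pi)"
proof -
  have "sqrt (real n ^ 3) = real n * sqrt (real n)"
    by (simp add: power3_eq_cube real_sqrt_mult)
  then have root: "sqrt (C / (pi * real n ^ 3)) = sqrt C / (sqrt pi * (real n * sqrt (real n)))"
    by (simp add: real_sqrt_divide real_sqrt_mult)
  have powers: "R ^ n * (1/R) ^ n = 1" using assms(1) by (simp flip: power_mult_distrib)
  have "real n > 0" "sqrt (real n) > 0" using assms(2) by simp_all
  then have "real n * sqrt (real n) * R ^ n * (1/4 * sqrt (C / (pi * real n ^ 3)) * (1/R) ^ n)
      = (R ^ n * (1/R) ^ n) * (sqrt C / (4 * sqrt pi))"
    unfolding root by (simp add: field_simps)
  then show ?thesis unfolding powers by simp
qed

theorem mainTheorem6:
  fixes R :: real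
  assumes "R = (sqrt 5 - 1) / 4"
  shows "(\<lambda>n. (1/4 * sqrt ((4*R - 24*R^3) / (pi * real n ^ 3)) * (1/R) ^ n) / real (p n))
           \<longlonglongrightarrow> 1"
proof (rule ratio_limit_one[OF p_asymptotic])
  have R: "R = rho" using assms by (simp add: rho_def)
  have "0 < 4 * rho - 24 * rho ^ 3"
    using conjugate_rho_less_1 two_rho_less_1 by (simp flip: rho_constant)
  then show "sqrt (4 * rho - 24 * rho ^ 3) / (4 * sqrt pi) \<noteq> 0" by simp
  show "eventually (\<lambda>n. real n * sqrt (real n) * rho ^ n
          * (1/4 * sqrt ((4*R - 24*R^3) / (pi * real n ^ 3)) * (1/R) ^ n)
          = sqrt (4 * rho - 24 * rho ^ 3) / (4 * sqrt pi)) sequentially"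
    using eventually_ge_at_top[of 1]
  proof eventually_elim
    case (elim n)
    show ?case unfolding R by (rule normalization_identity) (use rho_pos elim in auto)
  qed
qed

end
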